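(* The functional $J_\lambda$ is coercive and bounded from below on $\mathcal{N}_\lambda$.
   Context: Let $s\in(0,1)$, $p>1$, $n>ps$, $p_s^*=\frac{np}{n-ps}$, $\Omega\subset\mathbb{R}^n$ a bounded smooth domain, $a,b>0$, $\theta>1$, $\alpha\in(0,1)$, $c\in L^\infty(\Omega)$, $c\ge0$, $\lambda>0$, and $1<p<p\theta<q\le p_s^*$. $X_0$ is the space of measurable $u$ on $\mathbb{R}^n$ vanishing a.e. outside $\Omega$ with $\|u\|:=\big(\int_{\mathbb{R}^{2n}}\frac{|u(x)-u(y)|^p}{|x-y|^{n+ps}}dxdy\big)^{1/p}<\infty$; $\|u\|_r$ is the $L^r(\Omega)$ norm; $u^+=\max\{u,0\}$. $f$ is homogeneous of order $q-1$ in the second variable, $F(x,t)=\int_0^tf(x,\tau)d\tau$, $qF=tf$, $|F(x,t)|\le\gamma|t|^q$. $J_\lambda(u)=\frac ap\|u\|^p+\frac b{p\theta}\|u\|^{p\theta}+\frac1p\int_\Omega(u^+)^p-\frac1{1-\alpha}\int_\Omega c(u^+)^{1-\alpha}-\lambda\int_\Omega F(x,u^+)$, and $\mathcal{N}_\lambda=\{u\in X_0: a\|u\|^p+\|u\|_p^p+b\|u\|^{p\theta}-\int_\Omega c(u^+)^{1-\alpha}-\lambda q\int_\Omega F(x,u^+)=0\}$. *)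

theory Defs
  imports "HOL-Analysis.Analysis"
begin

fun dirderiv :: "'a::euclidean_space list \<Rightarrow> ('a \<Rightarrow> real) \<Rightarrow> 'a \<Rightarrow> real" where
  "dirderiv [] g = g"
| "dirderiv (v # vs) g = (\<lambda>x. frechet_derivative (dirderiv vs g) (at x) v)"

definition smooth_fun :: "('a::euclidean_space \<Rightarrow> real) \<Rightarrow> bool" where
  "smooth_fun g \<longleftrightarrow> (\<forall>vs. dirderiv vs g differentiable_on UNIV)"

definition smooth_bounded_domain :: "'a::euclidean_space set \<Rightarrow> bool" where
  "smooth_bounded_domain \<Omega> \<longleftrightarrow> \<Omega> \<noteq> {} \<and> open \<Omega> \<and> connected \<Omega> \<and> bounded \<Omega> \<and>
     (\<exists>\<rho>. smooth_fun \<rho> \<and> \<Omega> = {x. \<rho> x < 0} \<and>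
          (\<forall>x. \<rho> x = 0 \<longrightarrow> frechet_derivative \<rho> (at x) \<noteq> (\<lambda>v. 0)))"

definition gagliardo :: "real \<Rightarrow> real \<Rightarrow> ('a::euclidean_space \<Rightarrow> real) \<Rightarrow> ennreal" where
  "gagliardo p s u = (\<integral>\<^sup>+ z. ennreal (\<bar>u (fst z) - u (snd z)\<bar> powr p /
       norm (fst z - snd z) powr (real DIM('a) + p * s)) \<partial>(lebesgue \<Otimes>\<^sub>M lebesgue))"

definition X0 :: "real \<Rightarrow> real \<Rightarrow> 'a::euclidean_space set \<Rightarrow> ('a \<Rightarrow> real) set" where
  "X0 p s \<Omega> = {u. u \<in> borel_measurable lebesgue \<and> (AE x in lebesgue. x \<notin> \<Omega> \<longrightarrow> u x = 0)
                  \<and> gagliardo p s u < \<infinity>}"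

definition Xnorm :: "real \<Rightarrow> real \<Rightarrow> ('a::euclidean_space \<Rightarrow> real) \<Rightarrow> real" where
  "Xnorm p s u = enn2real (gagliardo p s u) powr (1 / p)"

definition Lnorm :: "real \<Rightarrow> 'a::euclidean_space set \<Rightarrow> ('a \<Rightarrow> real) \<Rightarrow> real" where
  "Lnorm r \<Omega> u = (LINT x:\<Omega>|lebesgue. \<bar>u x\<bar> powr r) powr (1 / r)"

definition pos_part :: "real \<Rightarrow> real" where
  "pos_part t = max t 0"

definition J_fun :: "real \<Rightarrow> real \<Rightarrow> real \<Rightarrow> real \<Rightarrow> real \<Rightarrow> real \<Rightarrow> ('a::euclidean_space \<Rightarrow> real)
    \<Rightarrow> real \<Rightarrow> 'a set \<Rightarrow> ('a \<Rightarrow> real \<Rightarrow> real) \<Rightarrow> ('a \<Rightarrow> real) \<Rightarrow> real" where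
  "J_fun p s a b \<theta> \<alpha> c lam \<Omega> F u =
     a / p * Xnorm p s u powr p + b / (p * \<theta>) * Xnorm p s u powr (p * \<theta>)
     + 1 / p * (LINT x:\<Omega>|lebesgue. pos_part (u x) powr p)
     - 1 / (1 - \<alpha>) * (LINT x:\<Omega>|lebesgue. c x * pos_part (u x) powr (1 - \<alpha>))
     - lam * (LINT x:\<Omega>|lebesgue. F x (pos_part (u x)))"

definition Nehari :: "real \<Rightarrow> real \<Rightarrow> real \<Rightarrow> real \<Rightarrow> real \<Rightarrow> real \<Rightarrow> ('a::euclidean_space \<Rightarrow> real)
    \<Rightarrow> real \<Rightarrow> real \<Rightarrow> 'a set \<Rightarrow> ('a \<Rightarrow> real \<Rightarrow> real) \<Rightarrow> ('a \<Rightarrow> real) set" where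
  "Nehari p s a b \<theta> \<alpha> c lam q \<Omega> F =
     {u \<in> X0 p s \<Omega>.
        a * Xnorm p s u powr p + Lnorm p \<Omega> u powr p + b * Xnorm p s u powr (p * \<theta>)
        - (LINT x:\<Omega>|lebesgue. c x * pos_part (u x) powr (1 - \<alpha>))
        - lam * q * (LINT x:\<Omega>|lebesgue. F x (pos_part (u x))) = 0}"

end

theory Submission
  imports Defs "HOL-Real_Asymp.Real_Asymp"
begin

text \<open>Since \<open>u\<close> vanishes outside the bounded set \<open>\<Omega>\<close>, the Gagliardo seminorm controls
  \<open>\<integral>\<^sub>\<Omega> |u|\<^sup>p\<close> (a Poincare inequality). On the Nehari set the term \<open>\<lambda> \<integral> F(x, u\<^sup>+)\<close>
  can be eliminated from \<open>J\<^sub>\<lambda>\<close>, and the Poincare inequality then gives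
  \<open>J\<^sub>\<lambda>(u) \<ge> b (1/(p\<theta>) - 1/q) \<parallel>u\<parallel>\<^bsup>p\<theta>\<^esup> - A \<parallel>u\<parallel>\<^sup>p - B\<close>, which is coercive and bounded
  below because \<open>p\<theta> < q\<close> and \<open>\<theta> > 1\<close>.\<close>

lemma sigma_finite_lebesgue: "sigma_finite_measure (lebesgue :: 'a::euclidean_space measure)"
proof
  obtain A :: "'a set set" where A: "countable A" "A \<subseteq> sets lborel" "\<Union>A = space lborel"
    "\<forall>a\<in>A. emeasure lborel a \<noteq> \<infinity>"
    using lborel.sigma_finite_countable by blast
  then show "\<exists>A::'a set set. countable A \<and> A \<subseteq> sets lebesgue \<and> \<Union>A = space lebesgue
      \<and> (\<forall>a\<in>A. emeasure lebesgue a \<noteq> \<infinity>)"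
    by (intro exI[of _ A]) (auto simp: emeasure_completion)
qed

lemma bounded_imp_disjoint_ball_within_distance:
  fixes \<Omega> :: "'a::euclidean_space set"
  assumes "bounded \<Omega>"
  obtains y0 D where "0 < D" "\<And>y. y \<in> ball y0 1 \<Longrightarrow> y \<notin> \<Omega>"
    "\<And>x y. x \<in> \<Omega> \<Longrightarrow> y \<in> ball y0 1 \<Longrightarrow> norm (x - y) \<le> D"
proof -
  obtain R where R: "R > 0" "\<Omega> \<subseteq> ball 0 R" using bounded_subset_ballD[OF assms, of 0] by blast
  obtain e :: 'a where "e \<in> Basis" using nonempty_Basis by blast
  define y0 where "y0 = (R + 2) *\<^sub>R e"
  have y0: "norm y0 = R + 2" using R \<open>e \<in> Basis\<close> by (simp add: y0_def)
  have far: "R + 1 < norm y" and near: "norm y < R + 3" if "y \<in> ball y0 1" for y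
    using that y0 norm_triangle_ineq2[of y0 y] norm_triangle_ineq2[of y y0]
    by (auto simp: dist_norm norm_minus_commute)
  show thesis
  proof
    show "y \<notin> \<Omega>" if "y \<in> ball y0 1" for y
      using far[OF that] R(2) by auto
    show "norm (x - y) \<le> 2 * R + 3" if "x \<in> \<Omega>" "y \<in> ball y0 1" for x y
    proof -
      have "norm x < R" using R(2) that(1) by auto
      then show ?thesis using near[OF that(2)] norm_triangle_ineq4[of x y] by linarith
    qed
  qed (use R in simp)
qed

lemma Xnorm_powr_p:
  assumes "p \<noteq> 0"
  shows "Xnorm p s u powr p = enn2real (gagliardo p s u)"
  using assms by (simp add: Xnorm_def powr_powr)

lemma Lnorm_powr_p:
  assumes "p \<noteq> 0"
  shows "Lnorm p \<Omega> u powr p = (LINT x:\<Omega>|lebesgue. \<bar>u x\<bar> powr p)"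
proof -
  have "0 \<le> (LINT x:\<Omega>|lebesgue. \<bar>u x\<bar> powr p)"
    unfolding set_lebesgue_integral_def by (intro integral_nonneg_AE) auto
  then show ?thesis using assms by (simp add: Lnorm_def powr_powr)
qed

lemma gagliardo_ge_nn_integral_powr:
  fixes \<Omega> :: "'a::euclidean_space set"
  assumes "bounded \<Omega>" "\<Omega> \<in> sets lebesgue" "0 \<le> p * s"
  obtains \<kappa> where "0 < \<kappa>"
    "\<And>u. u \<in> borel_measurable lebesgue \<Longrightarrow> (AE x in lebesgue. x \<notin> \<Omega> \<longrightarrow> u x = 0) \<Longrightarrow>
       ennreal \<kappa> * (\<integral>\<^sup>+ x. ennreal (indicator \<Omega> x * \<bar>u x\<bar> powr p) \<partial>lebesgue) \<le> gagliardo p s u"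
proof -
  interpret L: sigma_finite_measure "lebesgue :: 'a measure" by (rule sigma_finite_lebesgue)
  obtain D y0 where D: "0 < D" and outside: "\<And>y. y \<in> ball y0 1 \<Longrightarrow> y \<notin> \<Omega>"
    and near: "\<And>x y. x \<in> \<Omega> \<Longrightarrow> y \<in> ball y0 1 \<Longrightarrow> norm (x - y) \<le> D"
    using bounded_imp_disjoint_ball_within_distance[OF assms(1)] by metis
  define B where "B = ball y0 (1::real)"
  define \<beta> where "\<beta> = real DIM('a) + p * s"
  define vB where "vB = measure lborel B"
  define \<kappa> where "\<kappa> = vB / D powr \<beta>"
  have vB: "vB > 0" by (simp add: vB_def B_def)
  have eB: "emeasure lebesgue B = ennreal vB"
    by (simp add: vB_def measure_def emeasure_ball B_def)
  have \<beta>: "0 \<le> \<beta>" using assms(3) by (simp add: \<beta>_def)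
  show thesis
  proof
    show "0 < \<kappa>" using vB D by (simp add: \<kappa>_def)
    fix u :: "'a \<Rightarrow> real"
    assume um[measurable]: "u \<in> borel_measurable lebesgue"
      and u0: "AE x in lebesgue. x \<notin> \<Omega> \<longrightarrow> u x = 0"
    define g where "g = (\<lambda>z::'a \<times> 'a. ennreal (\<bar>u (fst z) - u (snd z)\<bar> powr p /
      norm (fst z - snd z) powr \<beta>))"
    have [measurable]: "(\<lambda>z. fst z) \<in> borel_measurable (lebesgue \<Otimes>\<^sub>M lebesgue)"
      "(\<lambda>z. snd z) \<in> borel_measurable (lebesgue \<Otimes>\<^sub>M lebesgue)"
      "(\<lambda>z. u (fst z)) \<in> borel_measurable (lebesgue \<Otimes>\<^sub>M lebesgue)"
      "(\<lambda>z. u (snd z)) \<in> borel_measurable (lebesgue \<Otimes>\<^sub>M lebesgue)"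
      using measurable_compose[OF measurable_fst id_borel_measurable_lebesgue]
        measurable_compose[OF measurable_snd id_borel_measurable_lebesgue]
        measurable_compose[OF measurable_fst um] measurable_compose[OF measurable_snd um]
      by (simp_all add: id_def)
    have "g \<in> borel_measurable (lebesgue \<Otimes>\<^sub>M lebesgue)"
      unfolding g_def by measurable
    then have tonelli: "gagliardo p s u = (\<integral>\<^sup>+ x. \<integral>\<^sup>+ y. g (x, y) \<partial>lebesgue \<partial>lebesgue)"
      unfolding gagliardo_def g_def \<beta>_def by (rule L.nn_integral_fst[symmetric])
    have inner: "ennreal \<kappa> * ennreal (indicator \<Omega> x * \<bar>u x\<bar> powr p) \<le> (\<integral>\<^sup>+ y. g (x, y) \<partial>lebesgue)"
      for x
    proof (cases "x \<in> \<Omega>")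
      case True
      have "ennreal \<kappa> * ennreal (indicator \<Omega> x * \<bar>u x\<bar> powr p)
          = ennreal (\<bar>u x\<bar> powr p / D powr \<beta>) * emeasure lebesgue B"
        using True vB D eB by (simp add: \<kappa>_def ennreal_mult'[symmetric] mult_ac)
      also have "\<dots> = (\<integral>\<^sup>+ y\<in>B. ennreal (\<bar>u x\<bar> powr p / D powr \<beta>) \<partial>lebesgue)"
        by (simp add: B_def nn_integral_cmult_indicator)
      also have "\<dots> \<le> (\<integral>\<^sup>+ y. g (x, y) \<partial>lebesgue)"
      proof (rule nn_integral_mono_AE)
        show "AE y in lebesgue. ennreal (\<bar>u x\<bar> powr p / D powr \<beta>) * indicator B y \<le> g (x, y)"
          using u0
        proof eventually_elim
          case (elim y)
          show ?case
          proof (cases "y \<in> B")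
            case True
            have "0 < norm (x - y)" using outside \<open>x \<in> \<Omega>\<close> True by (auto simp: B_def)
            moreover have "norm (x - y) powr \<beta> \<le> D powr \<beta>"
              using near[OF \<open>x \<in> \<Omega>\<close>] True \<beta> by (intro powr_mono2) (auto simp: B_def)
            ultimately have "\<bar>u x\<bar> powr p / D powr \<beta> \<le> \<bar>u x\<bar> powr p / norm (x - y) powr \<beta>"
              using D by (intro divide_left_mono) auto
            moreover have "u y = 0" using elim outside True by (auto simp: B_def)
            ultimately show ?thesis using True by (simp add: g_def ennreal_leI)
          qed simp
        qed
      qed
      finally show ?thesis .
    qed simp
    have meas: "(\<lambda>x. indicator \<Omega> x * \<bar>u x\<bar> powr p) \<in> borel_measurable lebesgue"
      using assms(2) by measurable
    have "ennreal \<kappa> * (\<integral>\<^sup>+ x. ennreal (indicator \<Omega> x * \<bar>u x\<bar> powr p) \<partial>lebesgue)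
        = (\<integral>\<^sup>+ x. ennreal \<kappa> * ennreal (indicator \<Omega> x * \<bar>u x\<bar> powr p) \<partial>lebesgue)"
      by (rule nn_integral_cmult[symmetric]) (use meas in measurable)
    also have "\<dots> \<le> gagliardo p s u"
      unfolding tonelli by (intro nn_integral_mono inner)
    finally show "ennreal \<kappa> * (\<integral>\<^sup>+ x. ennreal (indicator \<Omega> x * \<bar>u x\<bar> powr p) \<partial>lebesgue)
        \<le> gagliardo p s u" .
  qed
qed

lemma X0_poincare:
  fixes \<Omega> :: "'a::euclidean_space set"
  assumes "bounded \<Omega>" "\<Omega> \<in> sets lebesgue" "0 \<le> p * s" "p \<noteq> 0"
  obtains K where "0 \<le> K"
    "\<And>u. u \<in> X0 p s \<Omega> \<Longrightarrow> set_integrable lebesgue \<Omega> (\<lambda>x. \<bar>u x\<bar> powr p)"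
    "\<And>u. u \<in> X0 p s \<Omega> \<Longrightarrow> (LINT x:\<Omega>|lebesgue. \<bar>u x\<bar> powr p) \<le> K * Xnorm p s u powr p"
proof -
  obtain \<kappa> where \<kappa>: "0 < \<kappa>"
    and gag: "\<And>u. u \<in> borel_measurable lebesgue \<Longrightarrow> (AE x in lebesgue. x \<notin> \<Omega> \<longrightarrow> u x = 0) \<Longrightarrow>
       ennreal \<kappa> * (\<integral>\<^sup>+ x. ennreal (indicator \<Omega> x * \<bar>u x\<bar> powr p) \<partial>lebesgue) \<le> gagliardo p s u"
    using gagliardo_ge_nn_integral_powr[OF assms(1-3)] by blast
  show thesis
  proof
    show "0 \<le> 1 / \<kappa>" using \<kappa> by simp
    fix u assume "u \<in> X0 p s \<Omega>"
    then have um: "u \<in> borel_measurable lebesgue" and u0: "AE x in lebesgue. x \<notin> \<Omega> \<longrightarrow> u x = 0"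
      and fin: "gagliardo p s u < \<infinity>" by (auto simp: X0_def)
    have meas: "(\<lambda>x. indicator \<Omega> x * \<bar>u x\<bar> powr p) \<in> borel_measurable lebesgue"
      using assms(2) um by measurable
    define N where "N = (\<integral>\<^sup>+ x. ennreal (indicator \<Omega> x * \<bar>u x\<bar> powr p) \<partial>lebesgue)"
    have \<kappa>N: "ennreal \<kappa> * N \<le> gagliardo p s u" unfolding N_def by (rule gag[OF um u0])
    then have "ennreal \<kappa> * N < \<infinity>" using fin by (rule le_less_trans)
    then have "N < \<infinity>" using \<kappa> by (auto simp: ennreal_mult_less_top)
    then have "integrable lebesgue (\<lambda>x. indicator \<Omega> x * \<bar>u x\<bar> powr p)"
      unfolding N_def by (intro integrableI_nonneg[OF meas]) auto
    then show "set_integrable lebesgue \<Omega> (\<lambda>x. \<bar>u x\<bar> powr p)"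
      by (simp add: set_integrable_def)
    have "(LINT x:\<Omega>|lebesgue. \<bar>u x\<bar> powr p) = enn2real N"
      unfolding set_lebesgue_integral_def N_def using meas by (subst integral_eq_nn_integral) auto
    moreover have "\<kappa> * enn2real N \<le> enn2real (gagliardo p s u)"
      using enn2real_mono[OF \<kappa>N] fin \<kappa> by (simp add: enn2real_mult)
    ultimately show "(LINT x:\<Omega>|lebesgue. \<bar>u x\<bar> powr p) \<le> 1 / \<kappa> * Xnorm p s u powr p"
      using \<kappa> assms(4) by (simp add: Xnorm_powr_p field_simps)
  qed
qed

lemma pos_part_powr_le_one_plus_powr:
  assumes "0 \<le> e" "e \<le> p"
  shows "pos_part v powr e \<le> 1 + \<bar>v\<bar> powr p"
proof (cases "v \<le> 1")
  case True
  then have "pos_part v powr e \<le> 1" using assms(1) by (intro powr_le1) (auto simp: pos_part_def)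
  then show ?thesis using powr_ge_zero[of "\<bar>v\<bar>" p] by linarith
next
  case False
  then show ?thesis using assms by (simp add: pos_part_def powr_mono add_increasing)
qed

lemma set_integral_weighted_pos_part_powr_le:
  fixes \<Omega> :: "'a::euclidean_space set"
  assumes "\<Omega> \<in> lmeasurable" "set_integrable lebesgue \<Omega> (\<lambda>x. \<bar>u x\<bar> powr p)"
    and "AE x in lebesgue. x \<in> \<Omega> \<longrightarrow> c x \<le> M" "0 \<le> M" "0 \<le> e" "e \<le> p"
  shows "(LINT x:\<Omega>|lebesgue. c x * pos_part (u x) powr e)
    \<le> M * (measure lebesgue \<Omega> + (LINT x:\<Omega>|lebesgue. \<bar>u x\<bar> powr p))"
proof (cases "set_integrable lebesgue \<Omega> (\<lambda>x. c x * pos_part (u x) powr e)")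
  case True
  have one: "set_integrable lebesgue \<Omega> (\<lambda>x. 1::real)"
    using assms(1) by (auto simp: set_integrable_def fmeasurable_def)
  have "(LINT x:\<Omega>|lebesgue. c x * pos_part (u x) powr e)
      \<le> (LINT x:\<Omega>|lebesgue. M * (1 + \<bar>u x\<bar> powr p))"
  proof (rule set_integral_mono_AE[OF True])
    show "set_integrable lebesgue \<Omega> (\<lambda>x. M * (1 + \<bar>u x\<bar> powr p))"
      using set_integral_add(1)[OF one assms(2)] by (rule set_integrable_mult_right)
    show "AE x\<in>\<Omega> in lebesgue. c x * pos_part (u x) powr e \<le> M * (1 + \<bar>u x\<bar> powr p)"
      using assms(3)
    proof eventually_elim
      case (elim x)
      show ?case
      proof
        assume "x \<in> \<Omega>"
        then have "c x * pos_part (u x) powr e \<le> M * pos_part (u x) powr e"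
          using elim by (intro mult_right_mono) auto
        also have "\<dots> \<le> M * (1 + \<bar>u x\<bar> powr p)"
          using pos_part_powr_le_one_plus_powr[OF assms(5,6)] assms(4) by (rule mult_left_mono)
        finally show "c x * pos_part (u x) powr e \<le> M * (1 + \<bar>u x\<bar> powr p)" .
      qed
    qed
  qed
  also have "\<dots> = M * (measure lebesgue \<Omega> + (LINT x:\<Omega>|lebesgue. \<bar>u x\<bar> powr p))"
  proof -
    have "(LINT x:\<Omega>|lebesgue. (1::real)) = measure lebesgue \<Omega>"
      using assms(1) by (subst set_integral_const) (auto simp: fmeasurable_def)
    then show ?thesis using set_integral_add(2)[OF one assms(2)] by simp
  qed
  finally show ?thesis .
next
  case False
  then have "(LINT x:\<Omega>|lebesgue. c x * pos_part (u x) powr e) = 0"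
    unfolding set_lebesgue_integral_def set_integrable_def by (rule not_integrable_integral_eq)
  moreover have "0 \<le> (LINT x:\<Omega>|lebesgue. \<bar>u x\<bar> powr p)"
    unfolding set_lebesgue_integral_def by (intro integral_nonneg_AE) auto
  ultimately show ?thesis using assms(4) by simp
qed

text \<open>The Nehari constraint expresses \<open>\<lambda> q \<integral> F(x, u\<^sup>+)\<close> through the other terms, which
  eliminates \<open>F\<close> from \<open>J\<^sub>\<lambda>\<close>.\<close>

lemma J_fun_on_Nehari:
  assumes "u \<in> Nehari p s a b \<theta> \<alpha> c lam q \<Omega> F" "p \<noteq> 0" "q \<noteq> 0"
  shows "J_fun p s a b \<theta> \<alpha> c lam \<Omega> F u =
    a * (1 / p - 1 / q) * Xnorm p s u powr p + b * (1 / (p * \<theta>) - 1 / q) * Xnorm p s u powr (p * \<theta>)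
    + 1 / p * (LINT x:\<Omega>|lebesgue. pos_part (u x) powr p)
    - 1 / q * (LINT x:\<Omega>|lebesgue. \<bar>u x\<bar> powr p)
    - (1 / (1 - \<alpha>) - 1 / q) * (LINT x:\<Omega>|lebesgue. c x * pos_part (u x) powr (1 - \<alpha>))"
proof -
  have lamI: "lam * (LINT x:\<Omega>|lebesgue. F x (pos_part (u x))) =
    (a * Xnorm p s u powr p + (LINT x:\<Omega>|lebesgue. \<bar>u x\<bar> powr p) + b * Xnorm p s u powr (p * \<theta>)
      - (LINT x:\<Omega>|lebesgue. c x * pos_part (u x) powr (1 - \<alpha>))) / q"
    using assms by (simp add: Nehari_def Lnorm_powr_p field_simps)
  show ?thesis
    unfolding J_fun_def lamI using assms(2,3) by (simp add: field_simps)
qed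

lemma J_fun_Nehari_lower_bound:
  fixes \<Omega> :: "'a::euclidean_space set"
  assumes \<Omega>: "bounded \<Omega>" "\<Omega> \<in> sets lebesgue"
    and s: "0 \<le> s" and p: "1 < p" and a: "0 \<le> a" and b: "0 < b" and \<theta>: "1 < \<theta>"
    and q: "p * \<theta> < q" and \<alpha>: "0 < \<alpha>" "\<alpha> < 1"
    and c: "AE x in lebesgue. x \<in> \<Omega> \<longrightarrow> c x \<le> M"
  obtains b' A B where "0 < b'" "0 \<le> A"
    "\<And>u. u \<in> Nehari p s a b \<theta> \<alpha> c lam q \<Omega> F \<Longrightarrow>
       b' * (Xnorm p s u powr p) powr \<theta> - A * Xnorm p s u powr p - B \<le> J_fun p s a b \<theta> \<alpha> c lam \<Omega> F u"
proof -
  have "0 \<le> p * s" "p \<noteq> 0" using p s by auto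
  obtain K where K: "0 \<le> K"
    and int: "\<And>u. u \<in> X0 p s \<Omega> \<Longrightarrow> set_integrable lebesgue \<Omega> (\<lambda>x. \<bar>u x\<bar> powr p)"
    and poincare: "\<And>u. u \<in> X0 p s \<Omega> \<Longrightarrow> (LINT x:\<Omega>|lebesgue. \<bar>u x\<bar> powr p) \<le> K * Xnorm p s u powr p"
    using X0_poincare[OF \<Omega> \<open>0 \<le> p * s\<close> \<open>p \<noteq> 0\<close>] by blast
  define M' where "M' = max M 0"
  define V where "V = measure lebesgue \<Omega>"
  define k where "k = 1 / (1 - \<alpha>) - 1 / q"
  define b' where "b' = b * (1 / (p * \<theta>) - 1 / q)"
  define A where "A = K / q + k * M' * K"
  define B where "B = k * M' * V"
  have "p < p * \<theta>" using p \<theta> by simp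
  then have qp: "p < q" and q1: "1 < q" using q p by linarith+
  have k: "0 < k"
    using q1 \<alpha> by (simp add: k_def field_simps)
  have M': "0 \<le> M'" by (simp add: M'_def)
  have \<Omega>_fin: "\<Omega> \<in> lmeasurable" using \<Omega> by (rule bounded_set_imp_lmeasurable)
  show thesis
  proof
    have "1 / q < 1 / (p * \<theta>)"
      using q p \<theta> q1 by (intro divide_strict_left_mono) (auto simp: zero_less_mult_iff)
    then show "0 < b'" using b by (simp add: b'_def)
    show "0 \<le> A" using K k M' q1 by (simp add: A_def)
    fix u assume u: "u \<in> Nehari p s a b \<theta> \<alpha> c lam q \<Omega> F"
    then have uX: "u \<in> X0 p s \<Omega>" by (simp add: Nehari_def)
    define G where "G = Xnorm p s u powr p"
    define Lp where "Lp = (LINT x:\<Omega>|lebesgue. \<bar>u x\<bar> powr p)"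
    define P where "P = (LINT x:\<Omega>|lebesgue. pos_part (u x) powr p)"
    define C where "C = (LINT x:\<Omega>|lebesgue. c x * pos_part (u x) powr (1 - \<alpha>))"
    have G: "0 \<le> G" by (simp add: G_def)
    have P: "0 \<le> P" unfolding P_def set_lebesgue_integral_def by (intro integral_nonneg_AE) auto
    have Lp: "Lp \<le> K * G" unfolding Lp_def G_def by (rule poincare[OF uX])
    have "C \<le> M' * (V + Lp)" unfolding C_def V_def Lp_def
      using c \<alpha> p by (intro set_integral_weighted_pos_part_powr_le[OF \<Omega>_fin int[OF uX]])
        (auto simp: M'_def elim!: AE_mp)
    also have "\<dots> \<le> M' * (V + K * G)" using Lp M' by (simp add: mult_left_mono)
    finally have C: "k * C \<le> k * M' * (V + K * G)" using k by (simp add: mult_left_mono)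
    have "1 / q \<le> 1 / p" using qp p by (intro divide_left_mono) auto
    then have "0 \<le> a * (1 / p - 1 / q) * G" using a G by simp
    moreover have "0 \<le> P / p" using P p by simp
    moreover have "Lp / q \<le> K / q * G" using Lp q1 by (simp add: divide_right_mono)
    moreover have "J_fun p s a b \<theta> \<alpha> c lam \<Omega> F u
        = a * (1 / p - 1 / q) * G + b' * G powr \<theta> + P / p - Lp / q - k * C"
      using J_fun_on_Nehari[OF u \<open>p \<noteq> 0\<close>] q1
      by (simp add: G_def Lp_def P_def C_def b'_def k_def powr_powr)
    ultimately have "b' * G powr \<theta> - K / q * G - k * M' * (V + K * G) \<le> J_fun p s a b \<theta> \<alpha> c lam \<Omega> F u"
      using C by linarith
    then show "b' * (Xnorm p s u powr p) powr \<theta> - A * Xnorm p s u powr p - B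
        \<le> J_fun p s a b \<theta> \<alpha> c lam \<Omega> F u"
      unfolding G_def A_def B_def by (simp add: algebra_simps)
  qed
qed

lemma powr_minus_linear_bounded_below:
  fixes b \<theta> A B :: real
  assumes "0 < b" "1 < \<theta>" "0 \<le> A"
  obtains C where "\<And>G. 0 \<le> G \<Longrightarrow> C \<le> b * G powr \<theta> - A * G - B"
proof -
  have "filterlim (\<lambda>G. b * G powr \<theta> - A * G - B) at_top at_top"
    using assms(1,2) by real_asymp
  then have "eventually (\<lambda>G. 0 \<le> b * G powr \<theta> - A * G - B) at_top"
    unfolding filterlim_at_top by (rule spec)
  then obtain T where T: "\<And>G. T \<le> G \<Longrightarrow> 0 \<le> b * G powr \<theta> - A * G - B"
    unfolding eventually_at_top_linorder by blast
  show thesis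
  proof (rule that[of "min 0 (- A * T - B)"])
    fix G :: real assume "0 \<le> G"
    show "min 0 (- A * T - B) \<le> b * G powr \<theta> - A * G - B"
    proof (cases "T \<le> G")
      case True
      then show ?thesis using T by force
    next
      case False
      then have "A * G \<le> A * T" using assms(3) by (intro mult_left_mono) auto
      moreover have "0 \<le> b * G powr \<theta>" using assms(1) by simp
      ultimately show ?thesis by linarith
    qed
  qed
qed

theorem lemma2p5:
  fixes \<Omega> :: "'a::euclidean_space set"
    and s p a b \<theta> \<alpha> lam q \<gamma> :: real
    and c :: "'a \<Rightarrow> real"
    and f F :: "'a \<Rightarrow> real \<Rightarrow> real"
  assumes s: "0 < s" "s < 1"
    and p: "1 < p"
    and n_ps: "real DIM('a) > p * s"
    and dom: "smooth_bounded_domain \<Omega>"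
    and ab: "a > 0" "b > 0"
    and \<theta>: "\<theta> > 1"
    and \<alpha>: "0 < \<alpha>" "\<alpha> < 1"
    and c_meas: "c \<in> borel_measurable lebesgue"
    and c_bdd: "\<exists>M. AE x in lebesgue. x \<in> \<Omega> \<longrightarrow> \<bar>c x\<bar> \<le> M"
    and c_nonneg: "\<forall>x\<in>\<Omega>. 0 \<le> c x"
    and lam: "lam > 0"
    and q: "p * \<theta> < q" "q \<le> real DIM('a) * p / (real DIM('a) - p * s)"
    and f_hom: "\<forall>x t \<tau>. t > 0 \<longrightarrow> f x (t * \<tau>) = t powr (q - 1) * f x \<tau>"
    and F_def: "\<forall>x t. F x t = (LBINT \<tau>=0..t. f x \<tau>)"
    and qF: "\<forall>x t. q * F x t = t * f x t"
    and F_bound: "\<forall>x t. \<bar>F x t\<bar> \<le> \<gamma> * \<bar>t\<bar> powr q"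
  shows "(\<forall>M. \<exists>R. \<forall>u \<in> Nehari p s a b \<theta> \<alpha> c lam q \<Omega> F.
             Xnorm p s u \<ge> R \<longrightarrow> J_fun p s a b \<theta> \<alpha> c lam \<Omega> F u \<ge> M)
       \<and> (\<exists>C. \<forall>u \<in> Nehari p s a b \<theta> \<alpha> c lam q \<Omega> F. J_fun p s a b \<theta> \<alpha> c lam \<Omega> F u \<ge> C)"
proof -
  have "bounded \<Omega>" "open \<Omega>" using dom by (auto simp: smooth_bounded_domain_def)
  then have \<Omega>: "bounded \<Omega>" "\<Omega> \<in> sets lebesgue" by auto
  obtain M where "AE x in lebesgue. x \<in> \<Omega> \<longrightarrow> \<bar>c x\<bar> \<le> M" using c_bdd by blast
  then have c_le: "AE x in lebesgue. x \<in> \<Omega> \<longrightarrow> c x \<le> M" by eventually_elim auto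
  have "0 \<le> s" "0 \<le> a" using s ab by auto
  obtain b' A B where b': "0 < b'" and A: "0 \<le> A"
    and lower: "\<And>u. u \<in> Nehari p s a b \<theta> \<alpha> c lam q \<Omega> F \<Longrightarrow>
       b' * (Xnorm p s u powr p) powr \<theta> - A * Xnorm p s u powr p - B \<le> J_fun p s a b \<theta> \<alpha> c lam \<Omega> F u"
    using J_fun_Nehari_lower_bound[OF \<Omega> \<open>0 \<le> s\<close> p \<open>0 \<le> a\<close> ab(2) \<theta> q(1) \<alpha> c_le] by blast
  have "filterlim (\<lambda>t. b' * (t powr p) powr \<theta> - A * t powr p - B) at_top at_top"
    using b' \<theta> p by real_asymp
  then have coercive: "\<exists>R. \<forall>t\<ge>R. M \<le> b' * (t powr p) powr \<theta> - A * t powr p - B" for M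
    unfolding filterlim_at_top eventually_at_top_linorder by blast
  obtain C where "\<And>G. 0 \<le> G \<Longrightarrow> C \<le> b' * G powr \<theta> - A * G - B"
    using powr_minus_linear_bounded_below[OF b' \<theta> A] by blast
  then have "C \<le> b' * (t powr p) powr \<theta> - A * t powr p - B" for t by simp
  then show ?thesis using coercive lower by (meson order_trans)
qed

end
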